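(* Let $q$ be a prime power, $m\ge1$, $g_1,\dots,g_n\in\mathbb{F}_{q^m}$ linearly independent over $\mathbb{F}_q$, $r_1,\dots,r_n\in\mathbb{F}_{q^m}$, and for $0\le i\le n$ let $\mathfrak M_i$ be the interpolation module for $(g_1,\dots,g_i)$ and $(r_1,\dots,r_i)$ (defined in the context). Let $1\le i\le n$ and let $P,K,N,D\in\mathcal{L}_q(x,q^m)$ be such that the rows $[P(x)\ \ -K(x)]$ and $[N(x)\ \ -D(x)]$ form a basis of $\mathfrak M_{i-1}$. Put $\Gamma_i:=P(g_i)-K(r_i)$ and $\Delta_i:=N(g_i)-D(r_i)$. If $\Gamma_i\neq0$, then the rows of $$\begin{bmatrix}x^q-\Gamma_i^{q-1}x&0\\\Delta_ix&-\Gamma_ix\end{bmatrix}\circ\begin{bmatrix}P(x)&-K(x)\\N(x)&-D(x)\end{bmatrix}$$ form a basis of $\mathfrak M_i$. If $\Delta_i\neq0$, then the rows of $$\begin{bmatrix}\Delta_ix&-\Gamma_ix\\0&x^q-\Delta_i^{q-1}x\end{bmatrix}\circ\begin{bmatrix}P(x)&-K(x)\\N(x)&-D(x)\end{bmatrix}$$ form a basis of $\mathfrak M_i$.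
   Context: Write $[i]:=q^i$. A $q$-linearized polynomial is $f(x)=\sum_{j=0}^{d}a_jx^{[j]}$, $a_j\in\mathbb{F}_{q^m}$; $\mathcal{L}_q(x,q^m)$ is the ring of these under addition and composition $\circ$. For $\mathbb{F}_q$-linearly independent $g_1,\dots,g_i$, $\Pi_i(x):=\prod_{u\in\langle g_1,\dots,g_i\rangle}(x-u)$ ($\mathbb{F}_q$-span), which lies in $\mathcal{L}_q(x,q^m)$, and $\Lambda_i(x):=\sum_{l=1}^i(-1)^{i-l}r_l\det(\mathfrak D_l)/\det(M_i(g_1,\dots,g_i))$, where $M_i(v_1,\dots,v_s)$ is the $i\times s$ matrix with $(j,l)$ entry $v_l^{[j-1]}$ and $\mathfrak D_l$ is $M_i(g_1,\dots,g_i,x)$ with the $l$-th column removed; $\Lambda_i\in\mathcal{L}_q(x,q^m)$ and $\Lambda_i(g_l)=r_l$ for $l\le i$. $\mathcal{L}_q(x,q^m)^2$ is a left module via $h\circ[f_1\ f_2]=[h\circ f_1\ \ h\circ f_2]$. The interpolation module $\mathfrak M_i$ is the set of all $\beta\circ[\Pi_i(x)\ \ 0]+\gamma\circ[-\Lambda_i(x)\ \ x]$ with $\beta,\gamma\in\mathcal{L}_q(x,q^m)$; for $i=0$ we use $\Pi_0(x)=x$, $\Lambda_0=0$, so $\mathfrak M_0=\mathcal{L}_q(x,q^m)^2$. A basis of a submodule is a generating set $\{f^{(1)},\dots,f^{(s)}\}$ such that $\sum a_l\circ f^{(l)}=0$ with $a_l\in\mathcal{L}_q(x,q^m)$ implies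 all $a_l=0$. Composition of a $2\times2$ matrix with a $2\times2$ matrix over $\mathcal{L}_q(x,q^m)$ is defined like matrix multiplication with products replaced by composition. *)

theory Defs
  imports "HOL-Computational_Algebra.Polynomial" "HOL-Computational_Algebra.Primes"
    "Jordan_Normal_Form.Determinant"
begin

(* Ambient field F_{q^m}: a finite field type 'a with CARD('a) = Q^m.
   The subfield F_q is {x. x^Q = x}. Polynomials are 'a poly; composition is pcompose. *)

definition Fq :: "nat \<Rightarrow> 'a::field set" where
  "Fq Q = {x. x ^ Q = x}"

definition linpolys :: "nat \<Rightarrow> 'a::field poly set" where
  "linpolys Q = {f. \<forall>k. coeff f k \<noteq> 0 \<longrightarrow> (\<exists>j. k = Q ^ j)}"

definition qpow :: "nat \<Rightarrow> nat \<Rightarrow> 'a::field poly" where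
  "qpow Q j = monom 1 (Q ^ j)"

definition Fq_lin_indep :: "nat \<Rightarrow> nat \<Rightarrow> (nat \<Rightarrow> 'a::field) \<Rightarrow> bool" where
  "Fq_lin_indep Q n g \<longleftrightarrow> (\<forall>c. (\<forall>l\<in>{1..n}. c l \<in> Fq Q) \<and> (\<Sum>l=1..n. c l * g l) = 0
      \<longrightarrow> (\<forall>l\<in>{1..n}. c l = 0))"

definition Fq_span :: "nat \<Rightarrow> nat \<Rightarrow> (nat \<Rightarrow> 'a::field) \<Rightarrow> 'a set" where
  "Fq_span Q i g = {(\<Sum>l=1..i. c l * g l) | c. \<forall>l\<in>{1..i}. c l \<in> Fq Q}"

definition Pi_poly :: "nat \<Rightarrow> nat \<Rightarrow> (nat \<Rightarrow> 'a::field) \<Rightarrow> 'a poly" where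
  "Pi_poly Q i g = (\<Prod>u\<in>Fq_span Q i g. [:- u, 1:])"

(* Moore matrix M_i(g_1,...,g_i): (j,l) entry g_l^{[j-1]}; 0-based indices *)
definition moore :: "nat \<Rightarrow> nat \<Rightarrow> (nat \<Rightarrow> 'a::field) \<Rightarrow> 'a mat" where
  "moore Q i g = mat i i (\<lambda>(a, b). g (b + 1) ^ (Q ^ a))"

(* entries of M_i(g_1,...,g_i,x) as polynomials; column c (1-based), row j (1-based) *)
definition moore_x_entry :: "nat \<Rightarrow> nat \<Rightarrow> (nat \<Rightarrow> 'a::field) \<Rightarrow> nat \<Rightarrow> nat \<Rightarrow> 'a poly" where
  "moore_x_entry Q i g j c = (if c \<le> i then [: g c ^ (Q ^ (j - 1)) :] else qpow Q (j - 1))"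

(* D_l : M_i(g_1,...,g_i,x) with the l-th column (1-based) removed *)
definition Dmat :: "nat \<Rightarrow> nat \<Rightarrow> (nat \<Rightarrow> 'a::field) \<Rightarrow> nat \<Rightarrow> 'a poly mat" where
  "Dmat Q i g l = mat i i (\<lambda>(a, b). moore_x_entry Q i g (a + 1) (if b + 1 < l then b + 1 else b + 2))"

definition Lambda_poly :: "nat \<Rightarrow> nat \<Rightarrow> (nat \<Rightarrow> 'a::field) \<Rightarrow> (nat \<Rightarrow> 'a) \<Rightarrow> 'a poly" where
  "Lambda_poly Q i g r = (\<Sum>l=1..i. smult ((-1) ^ (i - l) * r l / det (moore Q i g)) (det (Dmat Q i g l)))"

definition pact :: "'a::field poly \<Rightarrow> 'a poly \<times> 'a poly \<Rightarrow> 'a poly \<times> 'a poly" where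
  "pact h f = (pcompose h (fst f), pcompose h (snd f))"

definition padd :: "'a::field poly \<times> 'a poly \<Rightarrow> 'a poly \<times> 'a poly \<Rightarrow> 'a poly \<times> 'a poly" where
  "padd f h = (fst f + fst h, snd f + snd h)"

definition interp_module :: "nat \<Rightarrow> nat \<Rightarrow> (nat \<Rightarrow> 'a::field) \<Rightarrow> (nat \<Rightarrow> 'a) \<Rightarrow> ('a poly \<times> 'a poly) set" where
  "interp_module Q i g r = {padd (pact \<beta> (Pi_poly Q i g, 0)) (pact \<gamma> (- Lambda_poly Q i g r, [:0, 1:])) | \<beta> \<gamma>.
      \<beta> \<in> linpolys Q \<and> \<gamma> \<in> linpolys Q}"

definition is_basis2 :: "nat \<Rightarrow> ('a::field poly \<times> 'a poly) set \<Rightarrow> 'a poly \<times> 'a poly \<Rightarrow> 'a poly \<times> 'a poly \<Rightarrow> bool" where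
  "is_basis2 Q M f1 f2 \<longleftrightarrow>
     M = {padd (pact a1 f1) (pact a2 f2) | a1 a2. a1 \<in> linpolys Q \<and> a2 \<in> linpolys Q} \<and>
     (\<forall>a1\<in>linpolys Q. \<forall>a2\<in>linpolys Q. padd (pact a1 f1) (pact a2 f2) = (0, 0) \<longrightarrow> a1 = 0 \<and> a2 = 0)"

(* 2x2 matrices over L_q as pairs of rows; composition *)
type_synonym 'a mat2 = "('a poly \<times> 'a poly) \<times> ('a poly \<times> 'a poly)"

definition mat2_comp :: "'a::field mat2 \<Rightarrow> 'a mat2 \<Rightarrow> 'a mat2" where
  "mat2_comp A B = (padd (pact (fst (fst A)) (fst B)) (pact (snd (fst A)) (snd B)),
                    padd (pact (fst (snd A)) (fst B)) (pact (snd (snd A)) (snd B)))"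

end

theory Submission
  imports Defs
begin

text \<open>
  A basis \<open>[P -K], [N -D]\<close> of \<open>\<M>\<^sub>i\<^sub>-\<^sub>1\<close> identifies \<open>\<M>\<^sub>i\<^sub>-\<^sub>1\<close> with pairs \<open>(a\<^sub>1, a\<^sub>2)\<close> of
  linearized polynomials, and the new interpolation condition at \<open>(g\<^sub>i, r\<^sub>i)\<close> becomes
  \<open>a\<^sub>1(\<Gamma>) + a\<^sub>2(\<Delta>) = 0\<close>, because linearized polynomials are additive. So it suffices that the
  rows of the given matrix form a basis of this kernel. If \<open>\<Gamma> \<noteq> 0\<close>, a linearized \<open>a\<close> with
  \<open>a(\<Gamma>) = 0\<close> factors as \<open>b \<circ> (x\<^sup>q - \<Gamma>\<^sup>q\<^sup>-\<^sup>1 x)\<close> (right division, the divisor's roots being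
  \<open>\<F>\<^sub>q \<Gamma>\<close>), which yields the basis; the case \<open>\<Delta> \<noteq> 0\<close> is symmetric.

  That \<open>\<M>\<^sub>i\<close> is exactly the set of solutions of the interpolation conditions requires
  \<open>\<Pi>\<^sub>i = (x\<^sup>q - a\<^sup>q\<^sup>-\<^sup>1x) \<circ> \<Pi>\<^sub>i\<^sub>-\<^sub>1\<close> with \<open>a = \<Pi>\<^sub>i\<^sub>-\<^sub>1(g\<^sub>i) \<noteq> 0\<close> (by counting roots, using
  \<open>|\<F>\<^sub>q| = q\<close>), so that linearized polynomials vanishing at \<open>g\<^sub>1, \<dots>, g\<^sub>i\<close> are right multiples
  of \<open>\<Pi>\<^sub>i\<close>, and that \<open>\<Lambda>\<^sub>i\<close> interpolates, i.e. Cramer's rule with a nonzero Moore determinant.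
\<close>

lemma pcompose_monom: "pcompose (monom c n) q = smult c (q ^ n)"
  by (induction n) (simp_all add: monom_0 monom_Suc pcompose_pCons)

lemma pcompose_as_sum: "pcompose f q = (\<Sum>k\<le>degree f. smult (coeff f k) (q ^ k))"
proof -
  have "pcompose f q = pcompose (\<Sum>k\<le>degree f. monom (coeff f k) k) q"
    by (simp add: poly_as_sum_of_monoms)
  then show ?thesis by (simp add: pcompose_sum pcompose_monom)
qed

lemma degree_diff_less_same_lead_coeff:
  fixes p q :: "'a::comm_ring poly"
  assumes "degree p = d" "degree q = d" "lead_coeff p = lead_coeff q" "d > 0"
  shows "degree (p - q) < d"
proof -
  have "degree (p - q) \<le> d - 1"
  proof (rule degree_le, intro allI impI)
    fix k assume "d - 1 < k"
    then consider "k = d" | "k > d" by linarith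
    then show "coeff (p - q) k = 0" by cases (use assms in \<open>auto simp: coeff_eq_0\<close>)
  qed
  then show ?thesis using assms(4) by simp
qed

subsection \<open>Frobenius and linearized polynomials\<close>

locale char_power =
  fixes Q :: nat and field_type :: "'a::field itself"
  assumes prime_CHAR: "prime CHAR('a)"
    and Q_CHAR_power: "\<exists>e>0. Q = CHAR('a) ^ e"
begin

lemma Q_ge_2: "Q \<ge> 2"
proof -
  obtain e where "e > 0" "Q = CHAR('a) ^ e" using Q_CHAR_power by blast
  moreover have "CHAR('a) \<ge> 2" using prime_CHAR prime_ge_2_nat by blast
  ultimately show ?thesis using power_increasing[of 1 e "CHAR('a)"] by simp
qed

lemma Q_pos: "Q > 0"
  using Q_ge_2 by simp

lemma Q_power_inject: "Q ^ a = Q ^ b \<longleftrightarrow> a = b"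
  using Q_ge_2 by simp

lemma Q_power_CHAR_power: obtains k where "Q ^ j = CHAR('a) ^ k"
  using Q_CHAR_power by (metis power_mult)

lemma power_Q_power_add:
  fixes x y :: "'b::comm_semiring_1"
  assumes "CHAR('b) = CHAR('a)"
  shows "(x + y) ^ (Q ^ j) = x ^ (Q ^ j) + y ^ (Q ^ j)"
  using Q_power_CHAR_power[of j] freshmans_dream' prime_CHAR assms by metis

lemma power_Q_power_sum:
  fixes f :: "'c \<Rightarrow> 'b::comm_semiring_1"
  assumes "CHAR('b) = CHAR('a)"
  shows "sum f A ^ (Q ^ j) = (\<Sum>x\<in>A. f x ^ (Q ^ j))"
  using Q_power_CHAR_power[of j] freshmans_dream_sum' prime_CHAR assms by metis

lemma power_Q_power_diff:
  fixes x y :: "'b::comm_ring_1"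
  assumes "CHAR('b) = CHAR('a)"
  shows "(x - y) ^ (Q ^ j) = x ^ (Q ^ j) - y ^ (Q ^ j)"
  using power_Q_power_add[OF assms, of "x - y" y j] by (simp add: eq_diff_eq)

lemma linpolys_iff: "f \<in> linpolys Q \<longleftrightarrow> (\<forall>k. coeff f k \<noteq> 0 \<longrightarrow> (\<exists>j. k = Q ^ j))"
  by (simp add: linpolys_def)

lemma linpolys_0 [simp]: "0 \<in> linpolys Q"
  by (simp add: linpolys_iff)

lemma linpolys_add: "f \<in> linpolys Q \<Longrightarrow> h \<in> linpolys Q \<Longrightarrow> f + h \<in> linpolys Q"
  by (auto simp: linpolys_iff) (metis add.right_neutral)

lemma linpolys_uminus: "f \<in> linpolys Q \<Longrightarrow> - f \<in> linpolys Q"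
  by (simp add: linpolys_iff)

lemma linpolys_diff: "f \<in> linpolys Q \<Longrightarrow> h \<in> linpolys Q \<Longrightarrow> f - h \<in> linpolys Q"
  using linpolys_add[of f "- h"] linpolys_uminus[of h] by simp

lemma linpolys_smult: "f \<in> linpolys Q \<Longrightarrow> smult c f \<in> linpolys Q"
  by (simp add: linpolys_iff)

lemma linpolys_sum: "(\<And>x. x \<in> A \<Longrightarrow> f x \<in> linpolys Q) \<Longrightarrow> sum f A \<in> linpolys Q"
  by (induction A rule: infinite_finite_induct) (auto intro: linpolys_add)

lemma monom_Q_power_linpolys: "monom c (Q ^ j) \<in> linpolys Q"
  by (auto simp: linpolys_iff coeff_monom split: if_splits)

lemma pCons_0_linpolys: "[:0, c:] \<in> linpolys Q"
  using monom_Q_power_linpolys[of c 0] by (simp add: monom_altdef)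

lemma coeff_0_linpoly: "f \<in> linpolys Q \<Longrightarrow> coeff f 0 = 0"
  using Q_pos by (auto simp: linpolys_iff)

lemma linpoly_eq_0_if_degree_less_Q:
  assumes "f \<in> linpolys Q" "degree f < Q" "poly f a = 0" "a \<noteq> 0"
  shows "f = 0"
proof -
  have "coeff f k = 0" if "k \<noteq> 1" for k
  proof (rule ccontr)
    assume "coeff f k \<noteq> 0"
    moreover obtain j where "k = Q ^ j"
      using \<open>coeff f k \<noteq> 0\<close> assms(1) by (auto simp: linpolys_iff)
    moreover have "k \<le> degree f" using \<open>coeff f k \<noteq> 0\<close> by (rule le_degree)
    ultimately have "Q ^ j < Q ^ 1" using assms(2) by simp
    then show False using that \<open>k = Q ^ j\<close> Q_ge_2 power_strict_increasing_iff[of Q j 1] by simp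
  qed
  then have f: "f = [:0, coeff f 1:]"
    by (intro poly_eqI) (auto simp: coeff_pCons split: nat.split)
  have "poly [:0, coeff f 1:] a = 0" using assms(3) by (simp only: f[symmetric])
  then have "coeff f 1 = 0" using assms(4) by simp
  then show ?thesis using f by simp
qed

lemma pcompose_linpoly_add:
  assumes "(f::'a poly) \<in> linpolys Q"
  shows "pcompose f (p + q) = pcompose f p + pcompose f q"
proof -
  have "smult (coeff f k) ((p + q) ^ k) = smult (coeff f k) (p ^ k) + smult (coeff f k) (q ^ k)" for k
  proof (cases "coeff f k = 0")
    case False
    then obtain j where "k = Q ^ j" using assms by (auto simp: linpolys_iff)
    then show ?thesis by (simp add: power_Q_power_add[OF semiring_char_poly] smult_add_right)
  qed simp
  then show ?thesis by (simp add: pcompose_as_sum sum.distrib)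
qed

lemma pcompose_linpoly_0: "(f::'a poly) \<in> linpolys Q \<Longrightarrow> pcompose f 0 = 0"
  by (simp add: pcompose_0' coeff_0_linpoly)

lemma pcompose_linpoly_uminus: "(f::'a poly) \<in> linpolys Q \<Longrightarrow> pcompose f (- p) = - pcompose f p"
  using pcompose_linpoly_add[of f "- p" p] pcompose_linpoly_0[of f] by (simp add: eq_neg_iff_add_eq_0)

lemma poly_linpoly_add: "(f::'a poly) \<in> linpolys Q \<Longrightarrow> poly f (x + y) = poly f x + poly f y"
  using pcompose_linpoly_add[of f "[:x:]" "[:y:]"] by (simp add: pcompose_pCons_0)

lemma poly_linpoly_0: "(f::'a poly) \<in> linpolys Q \<Longrightarrow> poly f 0 = 0"
  by (simp add: poly_0_coeff_0 coeff_0_linpoly)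

lemma poly_linpoly_uminus: "(f::'a poly) \<in> linpolys Q \<Longrightarrow> poly f (- x) = - poly f x"
  using pcompose_linpoly_uminus[of f "[:x:]"] by (simp add: pcompose_pCons_0)

lemma poly_linpoly_sum: "(f::'a poly) \<in> linpolys Q \<Longrightarrow> poly f (sum h A) = (\<Sum>x\<in>A. poly f (h x))"
  by (induction A rule: infinite_finite_induct) (auto simp: poly_linpoly_0 poly_linpoly_add)

lemma Fq_power_Q_power: "(c::'a) \<in> Fq Q \<Longrightarrow> c ^ (Q ^ j) = c"
  by (induction j) (simp_all add: Fq_def power_mult)

lemma poly_linpoly_Fq_mult:
  assumes "(f::'a poly) \<in> linpolys Q" "c \<in> Fq Q"
  shows "poly f (c * x) = c * poly f x"
proof -
  have eq: "coeff f k * (c * x) ^ k = c * (coeff f k * x ^ k)" for k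
  proof (cases "coeff f k = 0")
    case False
    then obtain j where "k = Q ^ j" using assms(1) by (auto simp: linpolys_iff)
    then show ?thesis using Fq_power_Q_power[OF assms(2)] by (simp add: power_mult_distrib)
  qed simp
  show ?thesis unfolding poly_altdef sum_distrib_left using eq by (intro sum.cong) auto
qed

lemma linpolys_power_Q_power:
  assumes "(p::'a poly) \<in> linpolys Q"
  shows "p ^ (Q ^ j) \<in> linpolys Q"
proof -
  have "p ^ (Q ^ j) = (\<Sum>k\<le>degree p. monom (coeff p k) k ^ (Q ^ j))"
    by (subst poly_as_sum_of_monoms[symmetric]) (simp add: power_Q_power_sum[OF semiring_char_poly])
  also have "\<dots> \<in> linpolys Q"
  proof (rule linpolys_sum)
    fix k
    show "monom (coeff p k) k ^ (Q ^ j) \<in> linpolys Q"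
    proof (cases "coeff p k = 0")
      case False
      then obtain t where "k = Q ^ t" using assms by (auto simp: linpolys_iff)
      then show ?thesis using monom_Q_power_linpolys by (simp add: monom_power flip: power_add)
    qed (use Q_pos in \<open>simp add: power_0_left\<close>)
  qed
  finally show ?thesis .
qed

lemma linpolys_pcompose:
  assumes "(f::'a poly) \<in> linpolys Q" "p \<in> linpolys Q"
  shows "pcompose f p \<in> linpolys Q"
  unfolding pcompose_as_sum
proof (rule linpolys_sum)
  fix k
  show "smult (coeff f k) (p ^ k) \<in> linpolys Q"
  proof (cases "coeff f k = 0")
    case False
    then obtain j where "k = Q ^ j" using assms(1) by (auto simp: linpolys_iff)
    then show ?thesis using linpolys_power_Q_power[OF assms(2)] by (simp add: linpolys_smult)
  qed simp
qed

lemma Fq_0 [simp]: "(0::'a) \<in> Fq Q" and Fq_1 [simp]: "(1::'a) \<in> Fq Q"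
  using Q_pos by (simp_all add: Fq_def)

lemma Fq_diff: "(x::'a) \<in> Fq Q \<Longrightarrow> y \<in> Fq Q \<Longrightarrow> x - y \<in> Fq Q"
  using power_Q_power_diff[OF refl, of x y 1] by (simp add: Fq_def)

lemma Fq_uminus: "(x::'a) \<in> Fq Q \<Longrightarrow> - x \<in> Fq Q"
  using Fq_diff[of 0 x] by simp

end

subsection \<open>The polynomial \<open>x\<^sup>q - a\<^sup>q\<^sup>-\<^sup>1 x\<close>\<close>

text \<open>Its roots are the \<open>\<F>\<^sub>q\<close>-multiples of \<open>a\<close>.\<close>
definition line_poly :: "nat \<Rightarrow> 'a::field \<Rightarrow> 'a poly" where
  "line_poly Q a = monom 1 Q - smult (a ^ (Q - 1)) [:0, 1:]"

lemma line_poly_altdef: "line_poly Q a = monom 1 Q - monom (a ^ (Q - 1)) 1"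
proof -
  have "[:0, c:] = monom c 1" for c :: 'a by (simp only: One_nat_def monom_Suc monom_0)
  then show ?thesis by (simp only: line_poly_def smult_monom mult_1_right)
qed

context char_power
begin

lemma line_poly_linpolys: "line_poly Q (a::'a) \<in> linpolys Q"
  unfolding line_poly_def using monom_Q_power_linpolys[of 1 1]
  by (intro linpolys_diff linpolys_smult pCons_0_linpolys) simp

lemma poly_line_poly_self: "poly (line_poly Q (a::'a)) a = 0"
proof -
  have "a * a ^ (Q - 1) = a ^ Q" using Q_pos by (metis Suc_diff_1 power_Suc)
  then show ?thesis by (simp add: line_poly_def poly_monom)
qed

lemma degree_line_poly: "degree (line_poly Q (a::'a)) = Q"
  and lead_coeff_line_poly: "lead_coeff (line_poly Q (a::'a)) = 1"
proof -
  have coeff: "coeff (line_poly Q a) k = (if k = Q then 1 else 0) - (if k = 1 then a ^ (Q - 1) else 0)" for k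
    by (simp add: line_poly_altdef coeff_monom)
  then have "coeff (line_poly Q a) Q = 1" using Q_ge_2 by simp
  moreover have "degree (line_poly Q a) \<le> Q" by (rule degree_le) (use Q_pos coeff in simp)
  ultimately show "degree (line_poly Q a) = Q" by (metis le_antisym le_degree zero_neq_one)
  then show "lead_coeff (line_poly Q a) = 1" using \<open>coeff (line_poly Q a) Q = 1\<close> by simp
qed

lemma pcompose_line_poly_eq_0: "pcompose p (line_poly Q (a::'a)) = 0 \<Longrightarrow> p = 0"
  by (rule pcompose_eq_0) (use degree_line_poly Q_pos in auto)

lemma line_poly_right_dvd:
  assumes "(\<beta>::'a poly) \<in> linpolys Q" and "poly \<beta> a = 0" and "a \<noteq> 0"
  shows "\<exists>\<delta>\<in>linpolys Q. \<beta> = pcompose \<delta> (line_poly Q a)"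
  using assms(1,2)
proof (induction "degree \<beta>" arbitrary: \<beta> rule: less_induct)
  case less
  show ?case
  proof (cases "\<beta> = 0")
    case True then show ?thesis by (intro bexI[of _ 0]) auto
  next
    case False
    obtain t where t: "degree \<beta> = Q ^ t"
      using leading_coeff_neq_0[OF False] less.prems(1) unfolding linpolys_iff by blast
    show ?thesis
    proof (cases t)
      case 0
      then show ?thesis
        using linpoly_eq_0_if_degree_less_Q[OF less.prems(1) _ less.prems(2) assms(3)] t Q_ge_2 False
        by simp
    next
      case (Suc s)
      define c where "c = lead_coeff \<beta>"
      define L where "L = pcompose (monom c (Q ^ s)) (line_poly Q a)"
      have c: "c \<noteq> 0" using False by (simp add: c_def)
      have L_eq: "L = smult c (line_poly Q a ^ Q ^ s)" by (simp add: L_def pcompose_monom)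
      have "line_poly Q a \<noteq> 0" using degree_line_poly[of a] Q_pos by auto
      then have "degree L = Q ^ s * Q"
        using c by (simp add: L_eq degree_power_eq degree_line_poly)
      then have deg_L: "degree L = degree \<beta>" using t Suc by simp
      have lead_L: "lead_coeff L = lead_coeff \<beta>"
        by (simp add: L_eq lead_coeff_power lead_coeff_line_poly c_def)
      have "degree (\<beta> - L) < degree \<beta>"
        by (rule degree_diff_less_same_lead_coeff[OF refl deg_L lead_L[symmetric]]) (use t Q_pos in simp)
      moreover have "\<beta> - L \<in> linpolys Q" unfolding L_def
        by (intro linpolys_diff less.prems(1) linpolys_pcompose monom_Q_power_linpolys line_poly_linpolys)
      moreover have "poly (\<beta> - L) a = 0"
        using less.prems(2) Q_pos by (simp add: L_def poly_pcompose poly_line_poly_self poly_monom)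
      ultimately obtain \<delta> where \<delta>: "\<delta> \<in> linpolys Q" "\<beta> - L = pcompose \<delta> (line_poly Q a)"
        using less.hyps by blast
      then have "\<beta> = pcompose (\<delta> + monom c (Q ^ s)) (line_poly Q a)"
        by (simp add: pcompose_add L_def diff_eq_eq)
      then show ?thesis using \<delta>(1) by (blast intro: linpolys_add monom_Q_power_linpolys)
    qed
  qed
qed

end

subsection \<open>Finite fields and \<open>\<F>\<^sub>q\<close>-spans\<close>

lemma of_nat_card_UNIV_eq_0: "of_nat (card (UNIV :: 'a::{ring_1, finite} set)) = (0::'a)"
proof -
  have "(\<Sum>x\<in>UNIV. x + 1) = (\<Sum>x\<in>UNIV. x :: 'a)"
    by (rule sum.reindex_bij_witness[of _ "\<lambda>x. x - 1" "\<lambda>x. x + 1"]) auto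
  then show ?thesis by (simp add: sum.distrib)
qed

lemma CHAR_eq_if_card_UNIV_prime_power:
  assumes "prime p" and "card (UNIV :: 'a::{field, finite} set) = p ^ k"
  shows "CHAR('a) = p"
proof -
  have "prime CHAR('a)"
    by (rule prime_CHAR_semidom[OF finite_imp_CHAR_pos]) simp
  moreover have "CHAR('a) dvd p ^ k"
    using of_nat_card_UNIV_eq_0[where 'a='a] of_nat_eq_0_iff_char_dvd assms(2) by metis
  ultimately show ?thesis using assms(1) prime_dvd_power primes_dvd_imp_eq by blast
qed

lemma power_card_UNIV: "(x::'a) ^ card (UNIV :: 'a::{field, finite} set) = x"
proof (cases "x = 0")
  case False
  have "(\<Prod>y\<in>UNIV - {0}. x * y) = (\<Prod>y\<in>UNIV - {0}. y)"
    by (rule prod.reindex_bij_witness[of _ "\<lambda>y. y / x" "\<lambda>y. x * y"]) (use False in auto)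
  then have "x ^ (card (UNIV :: 'a set) - 1) = 1"
    by (simp add: prod.distrib card_Diff_singleton prod_zero_iff)
  moreover have "card (UNIV :: 'a set) = Suc (card (UNIV :: 'a set) - 1)"
    using finite_UNIV_card_ge_0[where 'a='a] by simp
  ultimately show ?thesis by (metis power_Suc mult_1_right)
qed (use finite_UNIV_card_ge_0[where 'a='a] in \<open>simp add: power_0_left\<close>)

context char_power
begin

lemma Fq_eq_roots_line_poly_1: "Fq Q = {x::'a. poly (line_poly Q 1) x = 0}"
  by (simp add: Fq_def line_poly_def poly_monom)

lemma card_Fq_le: "card (Fq Q :: 'a set) \<le> Q"
proof -
  have "line_poly Q (1::'a) \<noteq> 0" using degree_line_poly[of 1] Q_pos by auto
  then show ?thesis
    unfolding Fq_eq_roots_line_poly_1 using card_poly_roots_bound degree_line_poly by metis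
qed

lemma line_poly_1_dvd: "line_poly Q (1::'a) dvd monom 1 (Q ^ m) - monom 1 1"
proof -
  have "line_poly Q (1::'a) ^ Q ^ j = monom 1 (Q ^ Suc j) - monom 1 (Q ^ j)" for j
    by (simp add: line_poly_altdef power_Q_power_diff[OF semiring_char_poly] monom_power)
  then have "monom 1 (Q ^ m) - monom (1::'a) 1 = (\<Sum>j<m. line_poly Q 1 ^ Q ^ j)"
    using sum_lessThan_telescope[of "\<lambda>j. monom (1::'a) (Q ^ j)" m] by simp
  then show ?thesis by (simp add: dvd_sum Q_pos)
qed

lemma Fq_lin_indep_mono:
  assumes "Fq_lin_indep Q n g" and "i \<le> n"
  shows "Fq_lin_indep Q i (g :: nat \<Rightarrow> 'a)"
  unfolding Fq_lin_indep_def
proof (intro allI impI ballI)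
  fix c l assume c: "(\<forall>l\<in>{1..i}. c l \<in> Fq Q) \<and> (\<Sum>l=1..i. c l * g l) = 0" and l: "l \<in> {1..i}"
  define d where "d l = (if l \<le> i then c l else 0)" for l
  have "(\<Sum>l=1..n. d l * g l) = (\<Sum>l=1..i. d l * g l)"
    by (rule sum.mono_neutral_right) (use assms(2) in \<open>auto simp: d_def\<close>)
  also have "\<dots> = (\<Sum>l=1..i. c l * g l)" by (simp add: d_def)
  finally have "(\<Sum>l=1..n. d l * g l) = (\<Sum>l=1..i. c l * g l)" .
  moreover have "\<forall>l\<in>{1..n}. d l \<in> Fq Q" using c by (simp add: d_def)
  ultimately have "\<forall>l\<in>{1..n}. d l = 0" using assms(1) c unfolding Fq_lin_indep_def by metis
  then have "d l = 0" using l assms(2) by auto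
  then show "c l = 0" using l by (simp add: d_def)
qed

lemma not_in_Fq_span:
  assumes "Fq_lin_indep Q (Suc i) (g :: nat \<Rightarrow> 'a)"
  shows "g (Suc i) \<notin> Fq_span Q i g"
proof
  assume "g (Suc i) \<in> Fq_span Q i g"
  then obtain c where g: "g (Suc i) = (\<Sum>l=1..i. c l * g l)" and c: "\<forall>l\<in>{1..i}. c l \<in> Fq Q"
    unfolding Fq_span_def by blast
  define d where "d l = (if l = Suc i then -1 else c l)" for l
  have "(\<Sum>l=1..Suc i. d l * g l) = (\<Sum>l=1..i. c l * g l) - g (Suc i)"
    by (simp add: d_def)
  then have "(\<Sum>l=1..Suc i. d l * g l) = 0" using g by simp
  moreover have "\<forall>l\<in>{1..Suc i}. d l \<in> Fq Q" using c Fq_uminus[OF Fq_1] by (auto simp: d_def)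
  ultimately have "d (Suc i) = 0" using assms unfolding Fq_lin_indep_def by auto
  then show False by (simp add: d_def)
qed

lemma poly_linpoly_Fq_span:
  assumes "(f::'a poly) \<in> linpolys Q" and "\<forall>l\<in>{1..i}. poly f (g l) = 0" and "u \<in> Fq_span Q i g"
  shows "poly f u = 0"
proof -
  obtain c where u: "u = (\<Sum>l=1..i. c l * g l)" and c: "\<forall>l\<in>{1..i}. c l \<in> Fq Q"
    using assms(3) unfolding Fq_span_def by blast
  then show ?thesis using assms(2) by (simp add: poly_linpoly_sum[OF assms(1)] poly_linpoly_Fq_mult[OF assms(1)])
qed

end

locale finite_char_power = char_power Q "TYPE('a::{field, finite})" for Q +
  fixes m :: nat
  assumes card_UNIV: "card (UNIV :: 'a set) = Q ^ m"
begin

lemma card_Fq: "card (Fq Q :: 'a set) = Q"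
proof (rule antisym[OF card_Fq_le])
  define T where "T = monom 1 (Q ^ m) - monom (1::'a) 1"
  obtain h where T: "T = line_poly Q 1 * h"
    using line_poly_1_dvd[of m] unfolding T_def by (rule dvdE)
  have "card {0::'a, 1} \<le> card (UNIV :: 'a set)" by (rule card_mono) auto
  then have "1 < Q ^ m" using card_UNIV by simp
  then have deg_T: "degree T = Q ^ m"
    using degree_add_eq_left[of "- monom (1::'a) 1" "monom 1 (Q ^ m)"] by (simp add: T_def degree_monom_eq)
  then have "degree T \<noteq> 0" using \<open>1 < Q ^ m\<close> Q_pos by simp
  then have "T \<noteq> 0" by auto
  then have "h \<noteq> 0" using T by auto
  moreover have "line_poly Q (1::'a) \<noteq> 0" using degree_line_poly[of 1] Q_pos by auto
  ultimately have deg_h: "Q ^ m = Q + degree h"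
    using deg_T by (simp add: T degree_mult_eq degree_line_poly)
  \<comment> \<open>all \<open>Q\<^sup>m\<close> elements are roots of \<open>T\<close>, while \<open>h\<close> has at most \<open>Q\<^sup>m - Q\<close> roots\<close>
  have "poly T x = 0" for x
    using power_card_UNIV[of x] card_UNIV by (simp add: T_def poly_monom)
  then have "UNIV \<subseteq> Fq Q \<union> {x. poly h x = 0}"
    by (auto simp: Fq_eq_roots_line_poly_1 T)
  then have "Q ^ m \<le> card (Fq Q \<union> {x::'a. poly h x = 0})"
    using card_UNIV card_mono[of "Fq Q \<union> {x::'a. poly h x = 0}" UNIV] by simp
  also have "\<dots> \<le> card (Fq Q :: 'a set) + card {x::'a. poly h x = 0}"
    by (rule card_Un_le)
  also have "\<dots> \<le> card (Fq Q :: 'a set) + degree h"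
    using card_poly_roots_bound[OF \<open>h \<noteq> 0\<close>] by simp
  finally show "Q \<le> card (Fq Q :: 'a set)" using deg_h by simp
qed

lemma card_Fq_span:
  assumes "Fq_lin_indep Q i (g :: nat \<Rightarrow> 'a)"
  shows "card (Fq_span Q i g) = Q ^ i"
proof -
  let ?lc = "\<lambda>c. \<Sum>l=1..i. c l * g l"
  let ?C = "PiE {1..i} (\<lambda>_. Fq Q :: 'a set)"
  have span: "Fq_span Q i g = ?lc ` ?C"
  proof (intro equalityI subsetI)
    fix u assume "u \<in> Fq_span Q i g"
    then obtain c where u: "u = ?lc c" and c: "\<forall>l\<in>{1..i}. c l \<in> Fq Q"
      unfolding Fq_span_def by blast
    have "u = ?lc (restrict c {1..i})" unfolding u by (intro sum.cong) auto
    moreover have "restrict c {1..i} \<in> ?C" using c by simp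
    ultimately show "u \<in> ?lc ` ?C" by (rule image_eqI)
  qed (auto simp: Fq_span_def)
  have indep: "\<And>d. \<forall>l\<in>{1..i}. d l \<in> Fq Q \<Longrightarrow> ?lc d = 0 \<Longrightarrow> \<forall>l\<in>{1..i}. d l = 0"
    using assms unfolding Fq_lin_indep_def by blast
  have "inj_on ?lc ?C"
  proof (rule inj_onI)
    fix c c' assume c: "c \<in> ?C" and c': "c' \<in> ?C" and eq: "?lc c = ?lc c'"
    have "?lc (\<lambda>l. c l - c' l) = 0"
      using eq by (simp add: left_diff_distrib sum_subtractf)
    moreover have "\<forall>l\<in>{1..i}. c l - c' l \<in> Fq Q" using c c' by (auto intro: Fq_diff)
    ultimately have "\<forall>l\<in>{1..i}. c l - c' l = 0" by (rule indep[rotated])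
    then show "c = c'" using c c' by (intro PiE_ext[OF c c']) auto
  qed
  then have "card (?lc ` ?C) = card ?C" by (rule card_image)
  then show ?thesis by (simp add: span card_PiE card_Fq)
qed

end

subsection \<open>Subspace polynomials\<close>

text \<open>Composing with \<open>line_poly Q a\<close>, \<open>a = \<Pi>\<^sub>i(g\<^sub>i\<^sub>+\<^sub>1)\<close>, adds the cosets of
  \<open>\<F>\<^sub>q g\<^sub>i\<^sub>+\<^sub>1\<close> to the roots.\<close>
primrec subspace_poly :: "nat \<Rightarrow> (nat \<Rightarrow> 'a::field) \<Rightarrow> nat \<Rightarrow> 'a poly" where
  "subspace_poly Q g 0 = [:0, 1:]"
| "subspace_poly Q g (Suc i) =
     pcompose (line_poly Q (poly (subspace_poly Q g i) (g (Suc i)))) (subspace_poly Q g i)"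

context char_power
begin

lemma subspace_poly_linpolys: "subspace_poly Q (g :: nat \<Rightarrow> 'a) i \<in> linpolys Q"
  by (induction i) (simp_all add: pCons_0_linpolys linpolys_pcompose line_poly_linpolys)

lemma degree_subspace_poly: "degree (subspace_poly Q (g :: nat \<Rightarrow> 'a) i) = Q ^ i"
  by (induction i) (simp_all add: degree_pcompose degree_line_poly)

lemma lead_coeff_subspace_poly: "lead_coeff (subspace_poly Q (g :: nat \<Rightarrow> 'a) i) = 1"
  by (induction i) (simp_all add: lead_coeff_comp degree_subspace_poly lead_coeff_line_poly Q_pos)

lemma poly_subspace_poly_g:
  assumes "l \<in> {1..i}"
  shows "poly (subspace_poly Q (g :: nat \<Rightarrow> 'a) i) (g l) = 0"
  using assms
proof (induction i)
  case (Suc i)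
  show ?case
  proof (cases "l = Suc i")
    case True then show ?thesis by (simp add: poly_pcompose poly_line_poly_self)
  next
    case False
    then show ?thesis using Suc by (simp add: poly_pcompose poly_linpoly_0[OF line_poly_linpolys])
  qed
qed simp

end

context finite_char_power
begin

lemma poly_subspace_poly_next_neq_0:
  assumes "Fq_lin_indep Q (Suc i) (g :: nat \<Rightarrow> 'a)"
  shows "poly (subspace_poly Q g i) (g (Suc i)) \<noteq> 0"
proof
  let ?S = "insert (g (Suc i)) (Fq_span Q i g)"
  assume "poly (subspace_poly Q g i) (g (Suc i)) = 0"
  then have "?S \<subseteq> {x. poly (subspace_poly Q g i) x = 0}"
    by (auto intro: poly_linpoly_Fq_span subspace_poly_linpolys poly_subspace_poly_g)
  moreover have nz: "subspace_poly Q g i \<noteq> 0"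
    using lead_coeff_subspace_poly[of g i] by auto
  ultimately have "card ?S \<le> card {x. poly (subspace_poly Q g i) x = 0}"
    by (intro card_mono poly_roots_finite)
  also have "\<dots> \<le> degree (subspace_poly Q g i)" by (rule card_poly_roots_bound[OF nz])
  finally have "card ?S \<le> degree (subspace_poly Q g i)" .
  moreover have "card ?S = Q ^ i + 1"
    using not_in_Fq_span[OF assms] card_Fq_span[OF Fq_lin_indep_mono[OF assms]] by simp
  ultimately show False by (simp add: degree_subspace_poly)
qed

lemma subspace_poly_right_dvd:
  assumes "Fq_lin_indep Q i (g :: nat \<Rightarrow> 'a)" and "h \<in> linpolys Q"
    and "\<forall>l\<in>{1..i}. poly h (g l) = 0"
  shows "\<exists>\<beta>\<in>linpolys Q. h = pcompose \<beta> (subspace_poly Q g i)"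
  using assms(1,3)
proof (induction i)
  case 0 then show ?case using assms(2) by (intro bexI[of _ h]) auto
next
  case (Suc i)
  obtain \<beta> where \<beta>: "\<beta> \<in> linpolys Q" "h = pcompose \<beta> (subspace_poly Q g i)"
    using Suc Fq_lin_indep_mono[OF Suc.prems(1)] by auto
  let ?a = "poly (subspace_poly Q g i) (g (Suc i))"
  have "poly \<beta> ?a = 0" using Suc.prems(2) \<beta>(2) by (simp add: poly_pcompose)
  then obtain \<delta> where "\<delta> \<in> linpolys Q" "\<beta> = pcompose \<delta> (line_poly Q ?a)"
    using line_poly_right_dvd[OF \<beta>(1)] poly_subspace_poly_next_neq_0[OF Suc.prems(1)] by blast
  then show ?case using \<beta>(2) by (auto simp: pcompose_assoc)
qed

lemma Pi_poly_eq_subspace_poly: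
  assumes "Fq_lin_indep Q i (g :: nat \<Rightarrow> 'a)"
  shows "Pi_poly Q i g = subspace_poly Q g i"
proof (rule poly_eqI_degree_lead_coeff)
  have deg_Pi: "degree (Pi_poly Q i g) = Q ^ i"
    unfolding Pi_poly_def using card_Fq_span[OF assms] by (subst degree_prod_sum_eq) auto
  moreover have "lead_coeff (Pi_poly Q i g) = 1" by (simp add: Pi_poly_def lead_coeff_prod)
  ultimately show "coeff (Pi_poly Q i g) (Q ^ i) = coeff (subspace_poly Q g i) (Q ^ i)"
    using lead_coeff_subspace_poly[of g i] by (simp add: degree_subspace_poly)
  show "card (Fq_span Q i g) \<ge> Q ^ i" by (simp add: card_Fq_span[OF assms])
  show "degree (Pi_poly Q i g) \<le> Q ^ i" "degree (subspace_poly Q g i) \<le> Q ^ i"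
    by (simp_all add: deg_Pi degree_subspace_poly)
  fix u assume u: "u \<in> Fq_span Q i g"
  have "poly (Pi_poly Q i g) u = 0"
    unfolding Pi_poly_def poly_prod using u by (auto simp: prod_zero_iff)
  moreover have "poly (subspace_poly Q g i) u = 0"
    using u by (auto intro: poly_linpoly_Fq_span subspace_poly_linpolys poly_subspace_poly_g)
  ultimately show "poly (Pi_poly Q i g) u = poly (subspace_poly Q g i) u" by simp
qed

end

subsection \<open>The Moore determinant and the interpolating polynomial\<close>

text \<open>The sequence \<open>g\<^sub>1, \<dots>, g\<^sub>i\<close> with \<open>g\<^sub>l\<close> deleted and \<open>x\<close> appended: evaluating the
  matrix \<open>Dmat Q i g l\<close> at \<open>x\<close> gives the Moore matrix of this sequence.\<close>
definition delete_snoc :: "(nat \<Rightarrow> 'a) \<Rightarrow> nat \<Rightarrow> nat \<Rightarrow> 'a \<Rightarrow> nat \<Rightarrow> 'a" where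
  "delete_snoc g i l x c = (if c < l then g c else if c < i then g (Suc c) else x)"

lemma moore_carrier: "moore Q i g \<in> carrier_mat i i"
  by (simp add: moore_def)

lemma poly_det_Dmat: "poly (det (Dmat Q i g l)) x = det (moore Q i (delete_snoc g i l x))"
proof -
  have "comm_ring_hom (\<lambda>p. poly p x)" by unfold_locales auto
  then have "poly (det (Dmat Q i g l)) x = det (map_mat (\<lambda>p. poly p x) (Dmat Q i g l))"
    by (simp add: comm_ring_hom.hom_det)
  also have "map_mat (\<lambda>p. poly p x) (Dmat Q i g l) = moore Q i (delete_snoc g i l x)"
    by (rule eq_matI) (auto simp: Dmat_def moore_def moore_x_entry_def qpow_def delete_snoc_def poly_monom)
  finally show ?thesis .
qed

lemma det_moore_delete_snoc_other:
  assumes "k \<in> {1..i}" "l \<in> {1..i}" "k \<noteq> l"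
  shows "det (moore Q i (delete_snoc g i l (g k))) = 0"
proof -
  let ?h = "delete_snoc g i l (g k)"
  obtain b where b: "b < i - 1" "?h (Suc b) = g k"
  proof (cases "k < l")
    case True
    then show ?thesis using assms by (intro that[of "k - 1"]) (auto simp: delete_snoc_def)
  next
    case False
    then have "Suc (Suc (k - 2)) = k" using assms by auto
    then show ?thesis using False assms by (intro that[of "k - 2"]) (auto simp: delete_snoc_def)
  qed
  have "?h (Suc (i - 1)) = g k" using assms by (simp add: delete_snoc_def)
  then show ?thesis
    using b assms by (intro det_identical_columns[OF moore_carrier, of b "i - 1"] eq_vecI)
      (auto simp: moore_def)
qed

lemma det_moore_delete_snoc_self:
  assumes "l \<in> {1..i}"
  shows "det (moore Q i (delete_snoc g i l (g l))) = (-1) ^ (i - l) * det (moore Q i g)"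
proof -
  have i: "i = (l - 1) + 1 + (i - l)" using assms by simp
  have last: "Suc (j + l - i) = l" if "j < i" "\<not> j < i - 1" for j using assms that by auto
  have "det (moore Q i g) = (- 1) ^ (1 * (i - l)) * det (mat i i (\<lambda>(a, b). moore Q i g $$
      (a, if b < l - 1 then b else if b < l - 1 + (i - l) then b + 1 else b - (i - l))))"
    by (rule det_swap_final_cols[OF moore_carrier i])
  also have "mat i i (\<lambda>(a, b). moore Q i g $$
      (a, if b < l - 1 then b else if b < l - 1 + (i - l) then b + 1 else b - (i - l)))
     = moore Q i (delete_snoc g i l (g l))"
    using assms last by (intro eq_matI) (auto simp: moore_def delete_snoc_def)
  finally have "det (moore Q i g) = (-1) ^ (i - l) * det (moore Q i (delete_snoc g i l (g l)))"
    by simp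
  then show ?thesis by (simp add: power_mult_distrib[symmetric] flip: power_add mult.assoc)
qed

lemma (in char_power) det_Dmat_linpolys:
  assumes "l \<in> {1..i}"
  shows "det (Dmat Q i (g :: nat \<Rightarrow> 'a) l) \<in> linpolys Q"
proof -
  let ?A = "Dmat Q i g l"
  have A: "?A \<in> carrier_mat i i" by (simp add: Dmat_def)
  have "i - 1 < i" using assms by simp
  then have "det ?A = (\<Sum>a<i. ?A $$ (a, i - 1) * cofactor ?A a (i - 1))"
    by (rule laplace_expansion_column[OF A])
  also have "\<dots> \<in> linpolys Q"
  proof (rule linpolys_sum)
    fix a assume a: "a \<in> {..<i}"
    have "degree (det (mat_delete ?A a (i - 1))) \<le> 0 * (i - 1)"
      by (rule degree_det_le[OF _ mat_delete_carrier[OF A]])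
         (use assms in \<open>auto simp: mat_delete_def Dmat_def moore_x_entry_def\<close>)
    moreover have "degree ((- 1 :: 'a poly) ^ (a + (i - 1))) = 0"
      using degree_power_le[of "- 1 :: 'a poly" "a + (i - 1)"] by simp
    ultimately have "degree (cofactor ?A a (i - 1)) = 0"
      unfolding cofactor_def using degree_mult_le le_zero_eq by (metis add_0 mult_0)
    then obtain c where "cofactor ?A a (i - 1) = [:c:]" by (metis degree_0_id)
    moreover have "?A $$ (a, i - 1) = monom 1 (Q ^ a)"
      using a assms by (simp add: Dmat_def moore_x_entry_def qpow_def)
    ultimately show "?A $$ (a, i - 1) * cofactor ?A a (i - 1) \<in> linpolys Q"
      using linpolys_smult[OF monom_Q_power_linpolys, of c 1 a] by simp
  qed
  finally show ?thesis .
qed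

lemma (in char_power) Lambda_poly_linpolys: "Lambda_poly Q i (g :: nat \<Rightarrow> 'a) r \<in> linpolys Q"
  unfolding Lambda_poly_def by (intro linpolys_sum linpolys_smult det_Dmat_linpolys)

context finite_char_power
begin

lemma linpoly_eq_0_if_vanishing_degree_less:
  assumes "Fq_lin_indep Q i (g :: nat \<Rightarrow> 'a)" and "h \<in> linpolys Q"
    and "\<forall>l\<in>{1..i}. poly h (g l) = 0" and "degree h < Q ^ i"
  shows "h = 0"
proof (rule ccontr)
  assume "h \<noteq> 0"
  obtain \<beta> where \<beta>: "\<beta> \<in> linpolys Q" "h = pcompose \<beta> (subspace_poly Q g i)"
    using subspace_poly_right_dvd[OF assms(1-3)] by blast
  have "degree \<beta> \<noteq> 0"
  proof
    assume "degree \<beta> = 0"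
    then have "\<beta> = [:coeff \<beta> 0:]" by (rule degree_0_id[symmetric])
    then have "\<beta> = 0" using coeff_0_linpoly[OF \<beta>(1)] by simp
    then show False using \<open>h \<noteq> 0\<close> \<beta>(2) by simp
  qed
  then have "degree h \<ge> Q ^ i" using \<beta>(2) by (simp add: degree_pcompose degree_subspace_poly)
  then show False using assms(4) by simp
qed

lemma det_moore_neq_0:
  assumes "Fq_lin_indep Q i (g :: nat \<Rightarrow> 'a)"
  shows "det (moore Q i g) \<noteq> 0"
proof
  let ?M = "moore Q i g"
  assume "det ?M = 0"
  then have "det ?M\<^sup>T = 0" by (simp add: det_transpose[OF moore_carrier])
  then obtain v where v: "v \<in> carrier_vec i" "v \<noteq> 0\<^sub>v i" "?M\<^sup>T *\<^sub>v v = 0\<^sub>v i"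
    using det_0_iff_vec_prod_zero_field[of "?M\<^sup>T" i] moore_carrier by auto
  define h where "h = (\<Sum>a<i. monom (v $ a) (Q ^ a))"
  have coeff_h: "coeff h k = (\<Sum>a<i. if Q ^ a = k then v $ a else 0)" for k
    by (simp add: h_def coeff_sum coeff_monom)
  have "h \<in> linpolys Q" unfolding h_def by (intro linpolys_sum monom_Q_power_linpolys)
  moreover have "\<forall>l\<in>{1..i}. poly h (g l) = 0"
  proof
    fix l assume l: "l \<in> {1..i}"
    have "poly h (g l) = (?M\<^sup>T *\<^sub>v v) $ (l - 1)"
      using l v(1) by (auto simp: h_def poly_sum poly_monom moore_def mult_mat_vec_def scalar_prod_def
          lessThan_atLeast0 mult.commute intro: sum.cong)
    moreover have "l - 1 < i" using l by auto
    ultimately show "poly h (g l) = 0" using v(3) by simp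
  qed
  moreover have "degree h < Q ^ i"
  proof -
    have "coeff h k = 0" if "k \<ge> Q ^ i" for k
      unfolding coeff_h using that Q_ge_2 by (intro sum.neutral) (auto simp: power_strict_increasing_iff)
    then have "degree h \<le> Q ^ i - 1" using Q_pos by (intro degree_le) auto
    moreover have "Q ^ i > 0" using Q_pos by simp
    ultimately show ?thesis by linarith
  qed
  ultimately have "h = 0" by (rule linpoly_eq_0_if_vanishing_degree_less[OF assms])
  have "v $ a = 0" if "a < i" for a
  proof -
    have "coeff h (Q ^ a) = v $ a"
      unfolding coeff_h using that by (simp add: Q_power_inject if_distrib cong: if_cong)
    then show ?thesis using \<open>h = 0\<close> by simp
  qed
  then have "v = 0\<^sub>v i" using v(1) by (intro eq_vecI) auto
  then show False using v(2) by simp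
qed

lemma poly_Lambda_poly_g:
  assumes "Fq_lin_indep Q i (g :: nat \<Rightarrow> 'a)" and "l \<in> {1..i}"
  shows "poly (Lambda_poly Q i g r) (g l) = r l"
proof -
  let ?d = "det (moore Q i g)"
  let ?f = "\<lambda>k. (-1) ^ (i - k) * r k / ?d * det (moore Q i (delete_snoc g i k (g l)))"
  have "poly (Lambda_poly Q i g r) (g l) = (\<Sum>k=1..i. ?f k)"
    by (simp add: Lambda_poly_def poly_sum poly_det_Dmat)
  also have "\<dots> = ?f l + (\<Sum>k\<in>{1..i} - {l}. ?f k)"
    using assms(2) by (simp add: sum.remove)
  also have "(\<Sum>k\<in>{1..i} - {l}. ?f k) = 0"
    using det_moore_delete_snoc_other[OF assms(2), of _ Q g] by (intro sum.neutral) auto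
  also have "?f l = r l"
  proof -
    have "((-1) ^ (i - l) * (-1) ^ (i - l) :: 'a) = 1" by (simp flip: power_add)
    then show ?thesis
      using det_moore_neq_0[OF assms(1)] by (simp add: det_moore_delete_snoc_self[OF assms(2)] field_simps)
  qed
  finally show ?thesis by simp
qed

end

subsection \<open>Interpolation modules and their bases\<close>

definition interp_solutions ::
    "nat \<Rightarrow> nat \<Rightarrow> (nat \<Rightarrow> 'a::field) \<Rightarrow> (nat \<Rightarrow> 'a) \<Rightarrow> ('a poly \<times> 'a poly) set" where
  "interp_solutions Q i g r = {f. fst f \<in> linpolys Q \<and> snd f \<in> linpolys Q \<and>
     (\<forall>l\<in>{1..i}. poly (fst f) (g l) + poly (snd f) (r l) = 0)}"

lemma interp_solutions_step:
  assumes "1 \<le> i"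
  shows "interp_solutions Q i g r =
    {f \<in> interp_solutions Q (i - 1) g r. poly (fst f) (g i) + poly (snd f) (r i) = 0}"
proof -
  have "{1..i} = insert i {1..i - 1}" using assms by auto
  then show ?thesis by (auto simp: interp_solutions_def)
qed

context finite_char_power
begin

lemma interp_module_eq_interp_solutions:
  assumes "Fq_lin_indep Q i (g :: nat \<Rightarrow> 'a)"
  shows "interp_module Q i g r = interp_solutions Q i g r"
proof (intro equalityI subsetI)
  fix f assume "f \<in> interp_module Q i g r"
  then obtain \<beta> \<gamma> where lin: "\<beta> \<in> linpolys Q" "\<gamma> \<in> linpolys Q"
    and f: "f = (pcompose \<beta> (subspace_poly Q g i) - pcompose \<gamma> (Lambda_poly Q i g r), \<gamma>)"
    unfolding interp_module_def Pi_poly_eq_subspace_poly[OF assms]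
    by (auto simp: padd_def pact_def pcompose_linpoly_0 pcompose_linpoly_uminus)
  show "f \<in> interp_solutions Q i g r"
    using lin assms poly_subspace_poly_g[of _ i g] poly_Lambda_poly_g[OF assms, of _ r]
    by (auto simp: f interp_solutions_def poly_pcompose poly_linpoly_0 intro!: linpolys_diff
        linpolys_pcompose subspace_poly_linpolys Lambda_poly_linpolys)
next
  fix f assume "f \<in> interp_solutions Q i g r"
  then have lin: "fst f \<in> linpolys Q" "snd f \<in> linpolys Q"
    and van: "\<forall>l\<in>{1..i}. poly (fst f) (g l) + poly (snd f) (r l) = 0"
    by (auto simp: interp_solutions_def)
  define h where "h = fst f + pcompose (snd f) (Lambda_poly Q i g r)"
  have "h \<in> linpolys Q"
    unfolding h_def using lin by (intro linpolys_add linpolys_pcompose Lambda_poly_linpolys)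
  moreover have "\<forall>l\<in>{1..i}. poly h (g l) = 0"
    using van poly_Lambda_poly_g[OF assms] by (simp add: h_def poly_pcompose)
  ultimately obtain \<beta> where \<beta>: "\<beta> \<in> linpolys Q" "h = pcompose \<beta> (subspace_poly Q g i)"
    using subspace_poly_right_dvd[OF assms] by blast
  have "f = padd (pact \<beta> (Pi_poly Q i g, 0)) (pact (snd f) (- Lambda_poly Q i g r, [:0, 1:]))"
    using \<beta> lin by (cases f) (simp add: padd_def pact_def Pi_poly_eq_subspace_poly[OF assms]
        pcompose_linpoly_0 pcompose_linpoly_uminus h_def flip: \<beta>(2))
  then show "f \<in> interp_module Q i g r" unfolding interp_module_def using \<beta>(1) lin(2) by blast
qed

end

text \<open>The row vector \<open>a\<close> times the \<open>2\<times>2\<close> matrix with rows \<open>f1\<close> and \<open>f2\<close>.\<close>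
definition lincomb2 ::
    "'a::field poly \<times> 'a poly \<Rightarrow> 'a poly \<times> 'a poly \<Rightarrow> 'a poly \<times> 'a poly \<Rightarrow> 'a poly \<times> 'a poly" where
  "lincomb2 a f1 f2 = padd (pact (fst a) f1) (pact (snd a) f2)"

lemma mat2_comp_eq_lincomb2: "mat2_comp (c1, c2) (f1, f2) = (lincomb2 c1 f1 f2, lincomb2 c2 f1 f2)"
  by (simp add: mat2_comp_def lincomb2_def)

lemma is_basis2_iff:
  "is_basis2 Q M f1 f2 \<longleftrightarrow>
     M = (\<lambda>a. lincomb2 a f1 f2) ` (linpolys Q \<times> linpolys Q) \<and>
     (\<forall>a\<in>linpolys Q \<times> linpolys Q. lincomb2 a f1 f2 = (0, 0) \<longrightarrow> a = (0, 0))"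
  by (auto simp: is_basis2_def lincomb2_def image_def)

context char_power
begin

lemma lincomb2_assoc:
  assumes "fst b \<in> linpolys Q" "snd (b :: 'a poly \<times> 'a poly) \<in> linpolys Q"
  shows "lincomb2 b (lincomb2 c1 f1 f2) (lincomb2 c2 f1 f2) = lincomb2 (lincomb2 b c1 c2) f1 f2"
  by (simp add: lincomb2_def padd_def pact_def pcompose_linpoly_add[OF assms(1)]
      pcompose_linpoly_add[OF assms(2)] pcompose_add pcompose_assoc algebra_simps)

lemma lincomb2_linpolys:
  assumes "(a :: 'a poly \<times> 'a poly) \<in> linpolys Q \<times> linpolys Q"
    and "c1 \<in> linpolys Q \<times> linpolys Q" "c2 \<in> linpolys Q \<times> linpolys Q"
  shows "lincomb2 a c1 c2 \<in> linpolys Q \<times> linpolys Q"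
  using assms by (auto simp: lincomb2_def padd_def pact_def intro!: linpolys_add linpolys_pcompose)

lemma poly_lincomb2:
  assumes "fst a \<in> linpolys Q" "snd (a :: 'a poly \<times> 'a poly) \<in> linpolys Q"
  shows "poly (fst (lincomb2 a f1 f2)) x + poly (snd (lincomb2 a f1 f2)) y =
    poly (fst a) (poly (fst f1) x + poly (snd f1) y) + poly (snd a) (poly (fst f2) x + poly (snd f2) y)"
  by (simp add: lincomb2_def padd_def pact_def poly_pcompose poly_linpoly_add[OF assms(1)]
      poly_linpoly_add[OF assms(2)] algebra_simps)

lemma is_basis2_lincomb2:
  fixes f1 f2 :: "'a poly \<times> 'a poly"
  assumes indep: "\<forall>a\<in>linpolys Q \<times> linpolys Q. lincomb2 a f1 f2 = (0, 0) \<longrightarrow> a = (0, 0)"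
    and S: "is_basis2 Q S c1 c2" and S_lin: "S \<subseteq> linpolys Q \<times> linpolys Q"
  shows "is_basis2 Q ((\<lambda>a. lincomb2 a f1 f2) ` S) (lincomb2 c1 f1 f2) (lincomb2 c2 f1 f2)"
  unfolding is_basis2_iff
proof
  have S_eq: "S = (\<lambda>b. lincomb2 b c1 c2) ` (linpolys Q \<times> linpolys Q)"
    and S_indep: "\<forall>b\<in>linpolys Q \<times> linpolys Q. lincomb2 b c1 c2 = (0, 0) \<longrightarrow> b = (0, 0)"
    using S by (simp_all add: is_basis2_iff)
  show "(\<lambda>a. lincomb2 a f1 f2) ` S =
      (\<lambda>b. lincomb2 b (lincomb2 c1 f1 f2) (lincomb2 c2 f1 f2)) ` (linpolys Q \<times> linpolys Q)"
    unfolding S_eq image_image by (intro image_cong refl) (simp add: lincomb2_assoc mem_Times_iff)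
  show "\<forall>b\<in>linpolys Q \<times> linpolys Q. lincomb2 b (lincomb2 c1 f1 f2) (lincomb2 c2 f1 f2) = (0, 0) \<longrightarrow> b = (0, 0)"
  proof (intro ballI impI)
    fix b :: "'a poly \<times> 'a poly" assume b: "b \<in> linpolys Q \<times> linpolys Q"
      and "lincomb2 b (lincomb2 c1 f1 f2) (lincomb2 c2 f1 f2) = (0, 0)"
    then have "lincomb2 (lincomb2 b c1 c2) f1 f2 = (0, 0)" by (simp add: lincomb2_assoc mem_Times_iff)
    moreover have "lincomb2 b c1 c2 \<in> linpolys Q \<times> linpolys Q" using b S_eq S_lin by blast
    ultimately have "lincomb2 b c1 c2 = (0, 0)" using indep by auto
    then show "b = (0, 0)" using S_indep b by blast
  qed
qed

end

definition eval_kernel :: "nat \<Rightarrow> 'a::field \<Rightarrow> 'a \<Rightarrow> ('a poly \<times> 'a poly) set" where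
  "eval_kernel Q u v = {a. fst a \<in> linpolys Q \<and> snd a \<in> linpolys Q \<and> poly (fst a) u + poly (snd a) v = 0}"

lemma eval_kernel_subset: "eval_kernel Q u v \<subseteq> linpolys Q \<times> linpolys Q"
  by (auto simp: eval_kernel_def)

context char_power
begin

lemma lincomb2_eval_kernel:
  assumes "b \<in> linpolys Q \<times> linpolys Q" "c1 \<in> eval_kernel Q u v" "c2 \<in> eval_kernel Q (u :: 'a) v"
  shows "lincomb2 b c1 c2 \<in> eval_kernel Q u v"
proof -
  have c: "c1 \<in> linpolys Q \<times> linpolys Q" "c2 \<in> linpolys Q \<times> linpolys Q"
    using assms(2,3) eval_kernel_subset by blast+
  have "poly (fst (lincomb2 b c1 c2)) u + poly (snd (lincomb2 b c1 c2)) v = 0"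
    using assms by (simp add: poly_lincomb2 mem_Times_iff eval_kernel_def poly_linpoly_0)
  then show ?thesis using lincomb2_linpolys[OF assms(1) c] by (simp add: eval_kernel_def mem_Times_iff)
qed

lemma is_basis2_eval_kernelI:
  assumes "c1 \<in> eval_kernel Q u v" "c2 \<in> eval_kernel Q (u :: 'a) v"
    and "\<And>a. a \<in> eval_kernel Q u v \<Longrightarrow> \<exists>b\<in>linpolys Q \<times> linpolys Q. a = lincomb2 b c1 c2"
    and "\<And>b. b \<in> linpolys Q \<times> linpolys Q \<Longrightarrow> lincomb2 b c1 c2 = (0, 0) \<Longrightarrow> b = (0, 0)"
  shows "is_basis2 Q (eval_kernel Q u v) c1 c2"
  unfolding is_basis2_iff using assms lincomb2_eval_kernel[OF _ assms(1,2)] by blast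

lemma pcompose_pCons_0_eq_0: "pcompose p [:0, c:] = 0 \<Longrightarrow> c \<noteq> 0 \<Longrightarrow> p = (0 :: 'a poly)"
  by (rule pcompose_eq_0) auto

lemma eval_kernel_basis_fst:
  assumes "u \<noteq> 0"
  shows "is_basis2 Q (eval_kernel Q u v) (line_poly Q (u :: 'a), 0) ([:0, v:], - [:0, u:])"
proof (rule is_basis2_eval_kernelI)
  show "(line_poly Q u, 0) \<in> eval_kernel Q u v" "([:0, v:], - [:0, u:]) \<in> eval_kernel Q u v"
    by (auto simp: eval_kernel_def line_poly_linpolys poly_line_poly_self pCons_0_linpolys
        intro: linpolys_uminus)
next
  fix a assume a: "a \<in> eval_kernel Q u v"
  define b2 where "b2 = pcompose (snd a) [:0, - 1 / u:]"
  define h where "h = fst a - pcompose b2 [:0, v:]"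
  have b2: "b2 \<in> linpolys Q"
    using a unfolding b2_def eval_kernel_def by (auto intro: linpolys_pcompose pCons_0_linpolys)
  have "h \<in> linpolys Q"
    using a b2 unfolding h_def eval_kernel_def by (auto intro: linpolys_diff linpolys_pcompose pCons_0_linpolys)
  moreover have "poly h u = 0"
    using a assms by (auto simp: h_def b2_def eval_kernel_def poly_pcompose poly_linpoly_uminus)
  ultimately obtain b1 where b1: "b1 \<in> linpolys Q" "h = pcompose b1 (line_poly Q u)"
    using line_poly_right_dvd assms by blast
  have "a = lincomb2 (b1, b2) (line_poly Q u, 0) ([:0, v:], - [:0, u:])"
    using a b1 assms by (cases a) (simp add: lincomb2_def padd_def pact_def pcompose_linpoly_0
        pcompose_linpoly_uminus[OF b2] b2_def h_def pcompose_pCons flip: pcompose_assoc b1(2))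
  then show "\<exists>b\<in>linpolys Q \<times> linpolys Q. a = lincomb2 b (line_poly Q u, 0) ([:0, v:], - [:0, u:])"
    using b1(1) b2 by blast
next
  fix b assume b: "b \<in> linpolys Q \<times> linpolys Q"
    and "lincomb2 b (line_poly Q u, 0) ([:0, v:], - [:0, u:]) = (0, 0)"
  then have L: "pcompose (fst b) (line_poly Q u) + pcompose (snd b) [:0, v:] = 0"
    and "pcompose (snd b) [:0, - u:] = 0"
    by (auto simp: lincomb2_def padd_def pact_def pcompose_linpoly_0)
  then have "snd b = 0" using assms pcompose_pCons_0_eq_0[of "snd b" "- u"] by simp
  then have "fst b = 0" using L pcompose_line_poly_eq_0 by simp
  then show "b = (0, 0)" using \<open>snd b = 0\<close> by (simp add: prod_eq_iff)
qed

lemma eval_kernel_basis_snd: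
  assumes "v \<noteq> 0"
  shows "is_basis2 Q (eval_kernel Q u v) ([:0, v:], - [:0, u:]) (0, line_poly Q (v :: 'a))"
proof (rule is_basis2_eval_kernelI)
  show "(0, line_poly Q v) \<in> eval_kernel Q u v" "([:0, v:], - [:0, u:]) \<in> eval_kernel Q u v"
    by (auto simp: eval_kernel_def line_poly_linpolys poly_line_poly_self pCons_0_linpolys
        intro: linpolys_uminus)
next
  fix a assume a: "a \<in> eval_kernel Q u v"
  define b1 where "b1 = pcompose (fst a) [:0, 1 / v:]"
  define h where "h = snd a - pcompose b1 (- [:0, u:])"
  have b1: "b1 \<in> linpolys Q"
    using a unfolding b1_def eval_kernel_def by (auto intro: linpolys_pcompose pCons_0_linpolys)
  have "h \<in> linpolys Q"
    using a b1 unfolding h_def eval_kernel_def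
    by (auto intro: linpolys_diff linpolys_pcompose linpolys_uminus pCons_0_linpolys)
  moreover have "poly h v = 0"
    using a assms by (auto simp: h_def b1_def eval_kernel_def poly_pcompose poly_linpoly_uminus add.commute)
  ultimately obtain b2 where b2: "b2 \<in> linpolys Q" "h = pcompose b2 (line_poly Q v)"
    using line_poly_right_dvd assms by blast
  have "a = lincomb2 (b1, b2) ([:0, v:], - [:0, u:]) (0, line_poly Q v)"
    using a b2 assms by (cases a) (simp add: lincomb2_def padd_def pact_def pcompose_linpoly_0
        b1_def h_def pcompose_pCons flip: pcompose_assoc b2(2))
  then show "\<exists>b\<in>linpolys Q \<times> linpolys Q. a = lincomb2 b ([:0, v:], - [:0, u:]) (0, line_poly Q v)"
    using b1 b2(1) by blast
next
  fix b assume b: "b \<in> linpolys Q \<times> linpolys Q"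
    and "lincomb2 b ([:0, v:], - [:0, u:]) (0, line_poly Q v) = (0, 0)"
  then have "pcompose (fst b) [:0, v:] = 0"
    and L: "pcompose (fst b) (- [:0, u:]) + pcompose (snd b) (line_poly Q v) = 0"
    by (auto simp: lincomb2_def padd_def pact_def pcompose_linpoly_0)
  then have "fst b = 0" using assms pcompose_pCons_0_eq_0[of "fst b" v] by simp
  then have "snd b = 0" using L pcompose_line_poly_eq_0 by simp
  then show "b = (0, 0)" using \<open>fst b = 0\<close> by (simp add: prod_eq_iff)
qed

end

context finite_char_power
begin

lemma interp_module_step:
  assumes "Fq_lin_indep Q i (g :: nat \<Rightarrow> 'a)" "1 \<le> i"
    and "is_basis2 Q (interp_module Q (i - 1) g r) f1 f2"
  shows "interp_module Q i g r = (\<lambda>a. lincomb2 a f1 f2) `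
    eval_kernel Q (poly (fst f1) (g i) + poly (snd f1) (r i)) (poly (fst f2) (g i) + poly (snd f2) (r i))"
proof -
  have "interp_solutions Q (i - 1) g r = interp_module Q (i - 1) g r"
    using assms(1) by (simp add: interp_module_eq_interp_solutions Fq_lin_indep_mono)
  also have "\<dots> = (\<lambda>a. lincomb2 a f1 f2) ` (linpolys Q \<times> linpolys Q)"
    using assms(3) by (simp add: is_basis2_iff)
  finally have span: "interp_solutions Q (i - 1) g r = (\<lambda>a. lincomb2 a f1 f2) ` (linpolys Q \<times> linpolys Q)" .
  have "interp_module Q i g r = interp_solutions Q i g r"
    using assms(1) by (rule interp_module_eq_interp_solutions)
  also have "\<dots> = {f \<in> (\<lambda>a. lincomb2 a f1 f2) ` (linpolys Q \<times> linpolys Q).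
      poly (fst f) (g i) + poly (snd f) (r i) = 0}"
    unfolding interp_solutions_step[OF assms(2)] span by (rule refl)
  also have "\<dots> = (\<lambda>a. lincomb2 a f1 f2) ` eval_kernel Q (poly (fst f1) (g i) + poly (snd f1) (r i))
      (poly (fst f2) (g i) + poly (snd f2) (r i))"
    by (auto simp: eval_kernel_def poly_lincomb2)
  finally show ?thesis .
qed

end

theorem lemma26:
  fixes g r :: "nat \<Rightarrow> 'a::{field, finite}"
    and Q m n i :: nat and P K N D :: "'a poly"
  assumes "\<exists>p k. prime p \<and> k > 0 \<and> Q = p ^ k"
    and "m \<ge> 1" and "card (UNIV :: 'a set) = Q ^ m"
    and "Fq_lin_indep Q n g"
    and "1 \<le> i" and "i \<le> n"
    and "P \<in> linpolys Q" and "K \<in> linpolys Q" and "N \<in> linpolys Q" and "D \<in> linpolys Q"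
    and "is_basis2 Q (interp_module Q (i - 1) g r) (P, - K) (N, - D)"
  defines "\<Gamma> \<equiv> poly P (g i) - poly K (r i)"
    and "\<Delta> \<equiv> poly N (g i) - poly D (r i)"
  shows "(\<Gamma> \<noteq> 0 \<longrightarrow>
           (let R = mat2_comp ((monom 1 Q - smult (\<Gamma> ^ (Q - 1)) [:0, 1:], 0),
                               ([:0, \<Delta>:], - [:0, \<Gamma>:])) ((P, - K), (N, - D))
            in is_basis2 Q (interp_module Q i g r) (fst R) (snd R)))
       \<and> (\<Delta> \<noteq> 0 \<longrightarrow>
           (let R = mat2_comp (([:0, \<Delta>:], - [:0, \<Gamma>:]),
                               (0, monom 1 Q - smult (\<Delta> ^ (Q - 1)) [:0, 1:])) ((P, - K), (N, - D))
            in is_basis2 Q (interp_module Q i g r) (fst R) (snd R)))"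
proof -
  \<comment> \<open>\<open>m \<ge> 1\<close> and the linearity of \<open>P, K, N, D\<close> follow from the other hypotheses.\<close>
  obtain p k where p: "prime p" "k > 0" "Q = p ^ k" using assms(1) by blast
  then have "CHAR('a) = p"
    using CHAR_eq_if_card_UNIV_prime_power[of p] assms(3) by (simp flip: power_mult)
  then interpret finite_char_power Q m
    using p assms(3) by unfold_locales auto
  have indep: "Fq_lin_indep Q i g" using assms(4,6) by (rule Fq_lin_indep_mono)
  have M: "interp_module Q i g r = (\<lambda>a. lincomb2 a (P, - K) (N, - D)) ` eval_kernel Q \<Gamma> \<Delta>"
    using interp_module_step[OF indep assms(5,11)] by (simp add: \<Gamma>_def \<Delta>_def)
  have "\<forall>a\<in>linpolys Q \<times> linpolys Q. lincomb2 a (P, - K) (N, - D) = (0, 0) \<longrightarrow> a = (0, 0)"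
    using assms(11) by (simp add: is_basis2_iff)
  then have "is_basis2 Q (interp_module Q i g r) (lincomb2 c1 (P, - K) (N, - D)) (lincomb2 c2 (P, - K) (N, - D))"
    if "is_basis2 Q (eval_kernel Q \<Gamma> \<Delta>) c1 c2" for c1 c2
    unfolding M using that eval_kernel_subset by (rule is_basis2_lincomb2)
  then show ?thesis
    unfolding Let_def mat2_comp_eq_lincomb2 fst_conv snd_conv line_poly_def[symmetric]
    using eval_kernel_basis_fst[of \<Gamma> \<Delta>] eval_kernel_basis_snd[of \<Delta> \<Gamma>] by blast
qed

end
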